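(* The condition \[ r(v)r''(v)+r'(v)\le 1 \quad\text{for all } v\in\big(\overline p_{Q,c}(q_h),\overline p_{Q,c}(q_\ell)\big) \] holds for every choice of $0<q_\ell<q_h<\infty$ and $c$ with $0<c<q_\ell$ (where $Q=[q_\ell,q_h]$) if and only if $r(v)r''(v)+r'(v)\le 1$ for every $v\in(0,1)$ with $\psi(v)>0$.
   Context: Let $F$ be a probability distribution on $[0,1]$ with support $[0,1]$ admitting a twice continuously differentiable density $f:(0,1)\to\mathbb{R}_{>0}$. Define the inverse hazard rate $r(v)=(1-F(v))/f(v)$ and the virtual valuation $\psi(v)=v-r(v)$ on $(0,1)$, and assume $\psi'(v)>0$ whenever $\psi(v)>0$. Given $Q=[q_\ell,q_h]$ with $0<q_\ell<q_h<\infty$ and a cost $c$ with $0<c<q_\ell$, for $q\in Q$ let $p_{Q,c}(q)$ be the unique maximizer over $p\in\mathbb{R}$ of $(p-c)\big(1-F(p/q)\big)$ and $\overline p_{Q,c}(q)=p_{Q,c}(q)/q$. *)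

theory Defs
  imports "HOL-Analysis.Analysis"
begin

definition C2_on :: "real set \<Rightarrow> (real \<Rightarrow> real) \<Rightarrow> bool" where
  "C2_on S g \<longleftrightarrow>
     (\<forall>x\<in>S. g differentiable (at x)) \<and>
     (\<forall>x\<in>S. deriv g differentiable (at x)) \<and>
     continuous_on S (deriv (deriv g))"

definition inv_hazard :: "(real \<Rightarrow> real) \<Rightarrow> (real \<Rightarrow> real) \<Rightarrow> real \<Rightarrow> real" where
  "inv_hazard F f v = (1 - F v) / f v"

definition virt_val :: "(real \<Rightarrow> real) \<Rightarrow> (real \<Rightarrow> real) \<Rightarrow> real \<Rightarrow> real" where
  "virt_val F f v = v - inv_hazard F f v"

definition profit :: "(real \<Rightarrow> real) \<Rightarrow> real \<Rightarrow> real \<Rightarrow> real \<Rightarrow> real" where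
  "profit F c q p = (p - c) * (1 - F (p / q))"

definition opt_price :: "(real \<Rightarrow> real) \<Rightarrow> real \<Rightarrow> real \<Rightarrow> real" where
  "opt_price F c q = (THE p. \<forall>p'. profit F c q p' \<le> profit F c q p)"

definition opt_price_norm :: "(real \<Rightarrow> real) \<Rightarrow> real \<Rightarrow> real \<Rightarrow> real" where
  "opt_price_norm F c q = opt_price F c q / q"

end

theory Submission
  imports Defs
begin

text \<open>
  For \<open>0 < c < q\<close> the profit \<open>(p - c)(1 - F(p/q))\<close> is positive exactly on \<open>(c, q)\<close>, so
  it attains its maximum there, and the first-order condition at a maximizer reads
  \<open>\<psi>(p/q) = c/q\<close>. Since \<open>\<psi>\<close> is strictly increasing wherever it is positive, this
  determines the maximizer uniquely, and the interval between the normalized optimal prices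
  at \<open>q\<^sub>h\<close> and at \<open>q\<^sub>l\<close> is exactly \<open>{v. c/q\<^sub>h < \<psi>(v) < c/q\<^sub>l}\<close>. Every such interval lies
  in \<open>{\<psi> > 0}\<close>; conversely a point with \<open>\<psi>(v) = b \<in> (0,1)\<close> lies in the interval for
  \<open>c = 1\<close>, \<open>q\<^sub>h = 2/b\<close>, \<open>q\<^sub>l = 2/(b+1)\<close>. So the intervals cover exactly \<open>{\<psi> > 0}\<close>, and
  the two sides of the equivalence quantify over the same points, whatever the condition on \<open>r\<close>.
\<close>

text \<open>
  The derivative is only known to be positive where \<open>g\<close> is, so the usual monotonicity
  theorems do not apply; instead look at the last point of \<open>[x, y]\<close> where \<open>g \<ge> g x\<close>.
\<close>

lemma DERIV_pos_where_pos_imp_le: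
  fixes g :: "real \<Rightarrow> real"
  assumes cont: "continuous_on {x..y} g" and "x \<le> y" and "0 < g x"
    and der: "\<And>t. t \<in> {x..<y} \<Longrightarrow> 0 < g t \<Longrightarrow> \<exists>l>0. (g has_real_derivative l) (at t)"
  shows "g x \<le> g y"
proof -
  define T where "T = {x..y} \<inter> g -` {g x..}"
  have "compact T"
    unfolding T_def compact_eq_bounded_closed
    by (auto intro: continuous_closed_preimage cont bounded_subset[of "{x..y}"])
  moreover have "x \<in> T"
    using \<open>x \<le> y\<close> by (simp add: T_def)
  ultimately obtain z where z: "z \<in> T" and z_max: "\<And>t. t \<in> T \<Longrightarrow> t \<le> z"
    using compact_attains_sup by (metis empty_iff)
  have "z = y"
  proof (rule ccontr)
    assume "z \<noteq> y"
    with z have "z \<in> {x..<y}" and gz: "g x \<le> g z"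
      by (auto simp: T_def)
    with der \<open>0 < g x\<close> obtain l where "l > 0" "(g has_real_derivative l) (at z)"
      by force
    then obtain d where "d > 0" and inc: "\<And>h. 0 < h \<Longrightarrow> h < d \<Longrightarrow> g z < g (z + h)"
      using DERIV_pos_inc_right by blast
    define h where "h = min (d / 2) (y - z)"
    have "0 < h" "h < d" "z + h \<le> y"
      using \<open>d > 0\<close> \<open>z \<in> {x..<y}\<close> by (auto simp: h_def)
    with inc gz \<open>z \<in> {x..<y}\<close> have "z + h \<in> T"
      by (fastforce simp: T_def)
    with z_max \<open>0 < h\<close> show False
      by fastforce
  qed
  with z show ?thesis
    by (simp add: T_def)
qed

lemma DERIV_pos_where_pos_imp_less:
  fixes g :: "real \<Rightarrow> real"
  assumes cont: "continuous_on {x..y} g" and "x < y" and "0 < g x"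
    and der: "\<And>t. t \<in> {x..<y} \<Longrightarrow> 0 < g t \<Longrightarrow> \<exists>l>0. (g has_real_derivative l) (at t)"
  shows "g x < g y"
proof -
  obtain l where "l > 0" "(g has_real_derivative l) (at x)"
    using der[of x] \<open>x < y\<close> \<open>0 < g x\<close> by auto
  then obtain d where "d > 0" and inc: "\<And>h. 0 < h \<Longrightarrow> h < d \<Longrightarrow> g x < g (x + h)"
    using DERIV_pos_inc_right by blast
  define h where "h = min (d / 2) (y - x)"
  have h: "0 < h" "h < d" "x + h \<le> y"
    using \<open>d > 0\<close> \<open>x < y\<close> by (auto simp: h_def)
  have "g (x + h) \<le> g y"
  proof (rule DERIV_pos_where_pos_imp_le[where g = g])
    show "continuous_on {x + h..y} g"
      by (rule continuous_on_subset[OF cont]) (use h in auto)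
    show "0 < g (x + h)"
      using inc[OF h(1,2)] \<open>0 < g x\<close> by linarith
  qed (use h der in auto)
  with inc[OF h(1,2)] show ?thesis
    by linarith
qed

locale cdf_with_density =
  fixes F f :: "real \<Rightarrow> real"
  assumes F_cont: "continuous_on UNIV F"
    and F_below: "\<And>x. x \<le> 0 \<Longrightarrow> F x = 0"
    and F_above: "\<And>x. x \<ge> 1 \<Longrightarrow> F x = 1"
    and F_deriv: "\<And>v. v \<in> {0<..<1} \<Longrightarrow> (F has_real_derivative f v) (at v)"
    and f_pos: "\<And>v. v \<in> {0<..<1} \<Longrightarrow> f v > 0"
begin

lemma F_less_1:
  assumes "x < 1"
  shows "F x < 1"
proof (cases "x \<le> 0")
  case True
  then show ?thesis
    using F_below by simp
next
  case False
  have "F x < F 1"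
  proof (rule DERIV_pos_imp_increasing_open[where f = F])
    show "\<exists>l. (F has_real_derivative l) (at t) \<and> 0 < l" if "x < t" "t < 1" for t
      using F_deriv[of t] f_pos[of t] that False by auto
    show "continuous_on {x..1} F"
      using F_cont continuous_on_subset by blast
  qed (rule assms)
  then show ?thesis
    using F_above[of 1] by simp
qed

lemma F_le_1: "F x \<le> 1"
  using F_less_1[of x] F_above[of x] by (cases "x < 1") auto

lemma inv_hazard_nonneg: "v \<in> {0<..<1} \<Longrightarrow> 0 \<le> inv_hazard F f v"
  using F_le_1[of v] f_pos[of v] by (simp add: inv_hazard_def)

lemma virt_val_less_1: "v \<in> {0<..<1} \<Longrightarrow> virt_val F f v < 1"
  using inv_hazard_nonneg[of v] by (simp add: virt_val_def)

lemma profit_nonpos: "p \<le> c \<Longrightarrow> profit F c q p \<le> 0"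
  using F_le_1[of "p / q"] by (simp add: profit_def mult_nonpos_nonneg)

lemma profit_eq_0: "0 < q \<Longrightarrow> q \<le> p \<Longrightarrow> profit F c q p = 0"
  using F_above[of "p / q"] by (simp add: profit_def)

lemma profit_pos: "0 < q \<Longrightarrow> c < p \<Longrightarrow> p < q \<Longrightarrow> 0 < profit F c q p"
  using F_less_1[of "p / q"] by (simp add: profit_def)

lemma profit_has_derivative:
  assumes "0 < q" and v: "p / q \<in> {0<..<1}"
  shows "(profit F c q has_real_derivative (1 - F (p / q)) - (p - c) * f (p / q) / q) (at p)"
proof -
  have "((\<lambda>p. F (p / q)) has_real_derivative f (p / q) * (1 / q)) (at p)"
    by (rule DERIV_chain2[where g = "\<lambda>p. p / q", OF F_deriv[OF v]])
      (use \<open>0 < q\<close> in \<open>auto intro!: derivative_eq_intros\<close>)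
  then show ?thesis
    unfolding profit_def[abs_def]
    by (auto intro!: derivative_eq_intros)
qed

lemma profit_max_exists:
  assumes "0 < c" "c < q"
  shows "\<exists>p. \<forall>p'. profit F c q p' \<le> profit F c q p"
proof -
  have "continuous_on {c..q} (profit F c q)"
    unfolding profit_def using \<open>0 < c\<close> \<open>c < q\<close>
    by (intro continuous_intros continuous_on_compose2[OF F_cont]) auto
  then obtain p
    where max: "\<And>p'. p' \<in> {c..q} \<Longrightarrow> profit F c q p' \<le> profit F c q p"
    using continuous_attains_sup[of "{c..q}" "profit F c q"] \<open>c < q\<close> by fastforce
  have "profit F c q p' \<le> profit F c q p" for p'
  proof -
    have "0 \<le> profit F c q p"
      using max[of c] \<open>c < q\<close> by (simp add: profit_def)
    then show ?thesis
      using max[of p'] profit_nonpos[of p' c q] profit_eq_0[of q p' c] assms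
      by (cases "p' < c \<or> q < p'") auto
  qed
  then show ?thesis
    by blast
qed

lemma profit_max_first_order_condition:
  assumes "0 < c" "c < q" and max: "\<forall>p'. profit F c q p' \<le> profit F c q p"
  shows "p / q \<in> {0<..<1}" and "virt_val F f (p / q) = c / q"
proof -
  have "0 < profit F c q ((c + q) / 2)"
    using assms by (intro profit_pos) auto
  with max have "0 < profit F c q p"
    by (meson less_le_trans)
  then have "c < p" "p < q"
    using profit_nonpos[of p c q] profit_eq_0[of q p c] assms by (auto simp: not_less[symmetric])
  with assms show v: "p / q \<in> {0<..<1}"
    by simp
  have "(1 - F (p / q)) - (p - c) * f (p / q) / q = 0"
    by (rule DERIV_local_max[OF profit_has_derivative[OF _ v], of 1]) (use assms in auto)
  with assms have "1 - F (p / q) = (p / q - c / q) * f (p / q)"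
    by (simp add: field_simps)
  with f_pos[OF v] show "virt_val F f (p / q) = c / q"
    by (simp add: virt_val_def inv_hazard_def)
qed

end

locale regular_cdf = cdf_with_density +
  assumes f_differentiable: "\<And>v. v \<in> {0<..<1} \<Longrightarrow> f differentiable (at v)"
    and virt_val_deriv_pos:
      "\<And>v. v \<in> {0<..<1} \<Longrightarrow> virt_val F f v > 0 \<Longrightarrow> deriv (virt_val F f) v > 0"
begin

lemma virt_val_differentiable:
  assumes "v \<in> {0<..<1}"
  shows "virt_val F f differentiable (at v)"
proof -
  have "F differentiable (at v)"
    using F_deriv[OF assms] real_differentiable_def by blast
  with f_differentiable[OF assms] f_pos[OF assms] show ?thesis
    unfolding virt_val_def[abs_def] inv_hazard_def
    by (auto intro!: differentiable_diff differentiable_divide)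
qed

lemma virt_val_strict_mono:
  assumes "x \<in> {0<..<1}" "y \<in> {0<..<1}" "x < y" "0 < virt_val F f x"
  shows "virt_val F f x < virt_val F f y"
proof (rule DERIV_pos_where_pos_imp_less[where g = "virt_val F f"])
  have "{x..y} \<subseteq> {0<..<1}"
    using assms by auto
  then show "continuous_on {x..y} (virt_val F f)"
    using virt_val_differentiable
    by (metis continuous_at_imp_continuous_on differentiable_imp_continuous_within subsetD)
  show "\<exists>l>0. (virt_val F f has_real_derivative l) (at t)"
    if "t \<in> {x..<y}" "0 < virt_val F f t" for t
  proof -
    from that assms have "t \<in> {0<..<1}"
      by auto
    with that virt_val_deriv_pos virt_val_differentiable show ?thesis
      using DERIV_deriv_iff_real_differentiable by blast
  qed
qed (use assms in auto)

lemma virt_val_less_iff: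
  assumes "x \<in> {0<..<1}" "y \<in> {0<..<1}" "0 < virt_val F f x"
  shows "virt_val F f x < virt_val F f y \<longleftrightarrow> x < y"
  using virt_val_strict_mono[OF assms(1,2)] virt_val_strict_mono[OF assms(2,1)] assms(3)
  by (cases x y rule: linorder_cases) auto

lemma ex1_profit_max:
  assumes "0 < c" "c < q"
  shows "\<exists>!p. \<forall>p'. profit F c q p' \<le> profit F c q p"
proof -
  have "p1 = p2" if "\<forall>p'. profit F c q p' \<le> profit F c q p1"
    and "\<forall>p'. profit F c q p' \<le> profit F c q p2" for p1 p2
  proof -
    note foc1 = profit_max_first_order_condition[OF assms that(1)]
    and foc2 = profit_max_first_order_condition[OF assms that(2)]
    have "p1 / q = p2 / q"
      using virt_val_less_iff[OF foc1(1) foc2(1)] virt_val_less_iff[OF foc2(1) foc1(1)]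
        foc1(2) foc2(2) assms by (auto simp: not_less_iff_gr_or_eq)
    with assms show ?thesis
      by simp
  qed
  with profit_max_exists[OF assms] show ?thesis
    by blast
qed

lemma opt_price_norm:
  assumes "0 < c" "c < q"
  shows "opt_price_norm F c q \<in> {0<..<1}" and "virt_val F f (opt_price_norm F c q) = c / q"
  using profit_max_first_order_condition[OF assms theI'[OF ex1_profit_max[OF assms]]]
  by (simp_all add: opt_price_norm_def opt_price_def)

lemma mem_opt_price_interval_iff:
  assumes "0 < c" "c < ql" "ql < qh" and v: "v \<in> {0<..<1}"
  shows "v \<in> {opt_price_norm F c qh<..<opt_price_norm F c ql} \<longleftrightarrow>
    c / qh < virt_val F f v \<and> virt_val F f v < c / ql"
proof -
  have "0 < c / qh"
    using assms by simp
  have "opt_price_norm F c qh < v \<longleftrightarrow> c / qh < virt_val F f v"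
    using virt_val_less_iff[OF opt_price_norm(1) v] opt_price_norm(2) \<open>0 < c / qh\<close> assms
    by simp
  moreover have "v < opt_price_norm F c ql \<longleftrightarrow> virt_val F f v < c / ql"
    if "0 < virt_val F f v"
    using virt_val_less_iff[OF v opt_price_norm(1) that] opt_price_norm(2) assms
    by simp
  ultimately show ?thesis
    using \<open>0 < c / qh\<close> by auto
qed

lemma opt_price_interval_subset:
  assumes "0 < ql" "ql < qh" "0 < c" "c < ql"
  shows "{opt_price_norm F c qh<..<opt_price_norm F c ql} \<subseteq> {v \<in> {0<..<1}. 0 < virt_val F f v}"
proof
  fix v
  assume v: "v \<in> {opt_price_norm F c qh<..<opt_price_norm F c ql}"
  have "opt_price_norm F c qh \<in> {0<..<1}" "opt_price_norm F c ql \<in> {0<..<1}"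
    using opt_price_norm(1) assms by simp_all
  with v have v01: "v \<in> {0<..<1}"
    by auto
  with v assms have "c / qh < virt_val F f v"
    using mem_opt_price_interval_iff[of c ql qh v] by auto
  moreover have "0 < c / qh"
    using assms by simp
  ultimately have "0 < virt_val F f v"
    by linarith
  with v01 show "v \<in> {v \<in> {0<..<1}. 0 < virt_val F f v}"
    by simp
qed

lemma opt_price_interval_exists:
  assumes v: "v \<in> {0<..<1}" and "0 < virt_val F f v"
  shows "\<exists>ql qh c. 0 < ql \<and> ql < qh \<and> 0 < c \<and> c < ql \<and>
    v \<in> {opt_price_norm F c qh<..<opt_price_norm F c ql}"
proof -
  define b where "b = virt_val F f v"
  \<comment> \<open>with \<open>c = 1\<close> the two levels \<open>c/q\<^sub>h = b/2\<close> and \<open>c/q\<^sub>l = (b+1)/2\<close> enclose \<open>b\<close>\<close>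
  have b: "0 < b" "b < 1"
    using assms virt_val_less_1 by (auto simp: b_def)
  define ql where "ql = 2 / (b + 1)"
  define qh where "qh = 2 / b"
  have q: "0 < ql" "ql < qh" "1 < ql"
    using b by (auto simp: ql_def qh_def field_simps)
  have "1 / qh < b" "b < 1 / ql"
    using b by (auto simp: ql_def qh_def field_simps)
  then have "v \<in> {opt_price_norm F 1 qh<..<opt_price_norm F 1 ql}"
    using mem_opt_price_interval_iff[of 1 ql qh v] q v by (simp add: b_def)
  with q show ?thesis
    by (intro exI[of _ ql] exI[of _ qh] exI[of _ 1]) simp
qed

lemma all_opt_price_intervals_iff:
  "(\<forall>ql qh c. 0 < ql \<longrightarrow> ql < qh \<longrightarrow> 0 < c \<longrightarrow> c < ql \<longrightarrow>
      (\<forall>v \<in> {opt_price_norm F c qh<..<opt_price_norm F c ql}. P v))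
    \<longleftrightarrow> (\<forall>v \<in> {0<..<1}. 0 < virt_val F f v \<longrightarrow> P v)"
proof (intro iffI ballI impI allI)
  fix v
  assume "v \<in> {0<..<1}" "0 < virt_val F f v"
  then obtain ql qh c where "0 < ql" "ql < qh" "0 < c" "c < ql"
    "v \<in> {opt_price_norm F c qh<..<opt_price_norm F c ql}"
    using opt_price_interval_exists by blast
  moreover assume "\<forall>ql qh c. 0 < ql \<longrightarrow> ql < qh \<longrightarrow> 0 < c \<longrightarrow> c < ql \<longrightarrow>
    (\<forall>v \<in> {opt_price_norm F c qh<..<opt_price_norm F c ql}. P v)"
  ultimately show "P v"
    by blast
next
  fix ql qh c v
  assume "0 < ql" "ql < qh" "0 < c" "c < ql" "v \<in> {opt_price_norm F c qh<..<opt_price_norm F c ql}"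
  then have "v \<in> {0<..<1}" "0 < virt_val F f v"
    using opt_price_interval_subset by blast+
  moreover assume "\<forall>v \<in> {0<..<1}. 0 < virt_val F f v \<longrightarrow> P v"
  ultimately show "P v"
    by blast
qed

end

theorem lemma8:
  fixes F f :: "real \<Rightarrow> real"
  assumes F_cont: "continuous_on UNIV F"
    and F_below: "\<And>x. x \<le> 0 \<Longrightarrow> F x = 0"
    and F_above: "\<And>x. x \<ge> 1 \<Longrightarrow> F x = 1"
    and F_deriv: "\<And>v. v \<in> {0<..<1} \<Longrightarrow> (F has_real_derivative f v) (at v)"
    and f_pos: "\<And>v. v \<in> {0<..<1} \<Longrightarrow> f v > 0"
    and f_C2: "C2_on {0<..<1} f"
    and psi_mono: "\<And>v. v \<in> {0<..<1} \<Longrightarrow> virt_val F f v > 0 \<Longrightarrow>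
                     deriv (virt_val F f) v > 0"
  shows "(\<forall>ql qh c. 0 < ql \<longrightarrow> ql < qh \<longrightarrow> 0 < c \<longrightarrow> c < ql \<longrightarrow>
            (\<forall>v \<in> {opt_price_norm F c qh <..< opt_price_norm F c ql}.
               inv_hazard F f v * deriv (deriv (inv_hazard F f)) v
                 + deriv (inv_hazard F f) v \<le> 1))
         \<longleftrightarrow>
         (\<forall>v \<in> {0<..<1}. virt_val F f v > 0 \<longrightarrow>
               inv_hazard F f v * deriv (deriv (inv_hazard F f)) v
                 + deriv (inv_hazard F f) v \<le> 1)"
proof -
  interpret regular_cdf F f
    using assms by unfold_locales (auto simp: C2_on_def)
  show ?thesis
    by (rule all_opt_price_intervals_iff)
qed

end
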